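(* Let $R$ be an $F$-finite $F$-pure ring of prime characteristic $p$ and $\mathfrak a,J$ ideals with $\mathfrak a\subseteq\sqrt J$. Then $\operatorname{ct}_J(\mathfrak a)=c^J(\mathfrak a)$ if and only if $c^{J_e}(\mathfrak a)=c^{J^{[p^e]}}(\mathfrak a)$ for every $e\in\mathbb N$.
   Context: $J_e=\{f\in R\mid \varphi(f^{1/p^e})\in J \text{ for all }\varphi\in\operatorname{Hom}_R(R^{1/p^e},R)\}$; $b^J_{\mathfrak a}(p^e)=\max\{t\in\mathbb N\mid\mathfrak a^t\not\subseteq J_e\}$ and $\operatorname{ct}_J(\mathfrak a)=\lim_e b^J_{\mathfrak a}(p^e)/p^e$. For ideals $\mathfrak a\subseteq\sqrt{\mathfrak b}$, $\nu^{\mathfrak b}_{\mathfrak a}(p^e)=\max\{m\in\mathbb N\mid\mathfrak a^m\not\subseteq\mathfrak b^{[p^e]}\}$ and $c^{\mathfrak b}(\mathfrak a)=\lim_e\nu^{\mathfrak b}_{\mathfrak a}(p^e)/p^e$; $J^{[p^e]}$ is the ideal generated by $p^e$-th powers of elements of $J$. *)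

theory Defs
  imports "HOL-Analysis.Analysis"
begin

definition is_ideal :: "'a::comm_ring_1 set \<Rightarrow> bool" where
  "is_ideal I \<longleftrightarrow> 0 \<in> I \<and> (\<forall>x\<in>I. \<forall>y\<in>I. x + y \<in> I) \<and> (\<forall>r. \<forall>x\<in>I. r * x \<in> I)"

definition ideal_gen :: "'a::comm_ring_1 set \<Rightarrow> 'a set" where
  "ideal_gen S = \<Inter>{I. is_ideal I \<and> S \<subseteq> I}"

fun ideal_pow :: "'a::comm_ring_1 set \<Rightarrow> nat \<Rightarrow> 'a set" where
  "ideal_pow a 0 = UNIV"
| "ideal_pow a (Suc m) = ideal_gen {x * y | x y. x \<in> a \<and> y \<in> ideal_pow a m}"

definition radical :: "'a::comm_ring_1 set \<Rightarrow> 'a set" where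
  "radical J = {x. \<exists>n. x ^ n \<in> J}"

definition frob_pow :: "'a::comm_ring_1 set \<Rightarrow> nat \<Rightarrow> 'a set" where
  "frob_pow J q = ideal_gen {x ^ q | x. x \<in> J}"

definition noetherian_ring :: "'a::comm_ring_1 itself \<Rightarrow> bool" where
  "noetherian_ring _ \<longleftrightarrow> (\<forall>I::'a set. is_ideal I \<longrightarrow> (\<exists>S. finite S \<and> I = ideal_gen S))"

text \<open>F-finite: F_*R (R with r acting by r^p) is a finitely generated R-module.\<close>
definition F_finite :: "'a::comm_ring_1 itself \<Rightarrow> nat \<Rightarrow> bool" where
  "F_finite _ p \<longleftrightarrow> (\<exists>S::'a set. finite S \<and> (\<forall>x. \<exists>c. x = (\<Sum>s\<in>S. c s ^ p * s)))"

text \<open>F-pure: the Frobenius R \<rightarrow> F_*R, r \<mapsto> r^p, is a pure map of R-modules,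
  expressed through the (standard) finite-linear-systems characterisation of purity.\<close>
definition F_pure :: "'a::comm_ring_1 itself \<Rightarrow> nat \<Rightarrow> bool" where
  "F_pure _ p \<longleftrightarrow> (\<forall>(n::nat) (m::nat) (A::nat \<Rightarrow> nat \<Rightarrow> 'a) (b::nat \<Rightarrow> 'a).
     (\<exists>y. \<forall>i<n. (\<Sum>j<m. A i j ^ p * y j) = b i ^ p) \<longrightarrow>
     (\<exists>x. \<forall>i<n. (\<Sum>j<m. A i j * x j) = b i))"

text \<open>Hom_R(R^{1/q}, R), identifying R^{1/q} with F^e_*R: additive maps
  with phi(r^q x) = r phi(x).  phi(f^{1/q}) corresponds to phi f.\<close>
definition frob_hom :: "nat \<Rightarrow> ('a::comm_ring_1 \<Rightarrow> 'a) \<Rightarrow> bool" where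
  "frob_hom q \<phi> \<longleftrightarrow> (\<forall>x y. \<phi> (x + y) = \<phi> x + \<phi> y) \<and> (\<forall>r x. \<phi> (r ^ q * x) = r * \<phi> x)"

definition J_e :: "'a::comm_ring_1 set \<Rightarrow> nat \<Rightarrow> nat \<Rightarrow> 'a set" where
  "J_e J p e = {f. \<forall>\<phi>. frob_hom (p ^ e) \<phi> \<longrightarrow> \<phi> f \<in> J}"

text \<open>b^J_a(p^e) and nu^b_a(p^e); max of an empty set is read as 0 (Sup on nat).\<close>
definition bJ :: "'a::comm_ring_1 set \<Rightarrow> 'a set \<Rightarrow> nat \<Rightarrow> nat \<Rightarrow> nat" where
  "bJ J a p e = Sup {t. \<not> ideal_pow a t \<subseteq> J_e J p e}"

definition nu :: "'a::comm_ring_1 set \<Rightarrow> 'a set \<Rightarrow> nat \<Rightarrow> nat \<Rightarrow> nat" where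
  "nu b a p e = Sup {m. \<not> ideal_pow a m \<subseteq> frob_pow b (p ^ e)}"

definition ct :: "'a::comm_ring_1 set \<Rightarrow> 'a set \<Rightarrow> nat \<Rightarrow> real" where
  "ct J a p = lim (\<lambda>e. real (bJ J a p e) / real p ^ e)"

definition fthr :: "'a::comm_ring_1 set \<Rightarrow> 'a set \<Rightarrow> nat \<Rightarrow> real" where
  "fthr b a p = lim (\<lambda>e. real (nu b a p e) / real p ^ e)"

end

theory Submission
  imports Defs "HOL-Computational_Algebra.Primes"
begin

(* Write nu_B(q) for the largest m with a^m not contained in B^[q]. F-purity makes Frobenius
   closure trivial (x^p in K^[p] forces x in K), so an element of a^nu outside B^[q] has its p-th
   power in a^(p nu) outside B^[pq]: nu_B(pq) >= p nu_B(q). Together with a^((k+n)q) <= (a^k)^[q]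
   for an ideal a generated by n elements, this makes nu_B(p^e)/p^e increasing and bounded, so
   c^B(a) exists; it is antitone in B and satisfies c^(B^[q])(a) = q c^B(a).
   Since b^J_a(p^e) = nu_(J_e)(1), the quotients c^(J_e)(a)/p^e lie within (n+1)/p^e above
   b^J_a(p^e)/p^e, and they decrease because J_e^[p] <= J_(e+1); hence they converge to ct_J(a)
   from above. As J^[p^e] <= J_e also gives c^(J_e)(a) <= p^e c^J(a), both sides of the
   equivalence say that c^(J_e)(a) = p^e c^J(a) for every e. *)

lemma is_ideal_ideal_gen: "is_ideal (ideal_gen S)"
  unfolding ideal_gen_def is_ideal_def by auto

lemma subset_ideal_gen: "S \<subseteq> ideal_gen S"
  unfolding ideal_gen_def by auto

lemma ideal_gen_least: "is_ideal I \<Longrightarrow> S \<subseteq> I \<Longrightarrow> ideal_gen S \<subseteq> I"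
  unfolding ideal_gen_def by auto

lemma ideal_gen_mono: "S \<subseteq> T \<Longrightarrow> ideal_gen S \<subseteq> ideal_gen T"
  by (meson is_ideal_ideal_gen ideal_gen_least subset_ideal_gen order_trans)

lemma ideal_gen_of_ideal: "is_ideal I \<Longrightarrow> ideal_gen I = I"
  by (simp add: ideal_gen_least subset_ideal_gen subset_antisym)

lemma ideal_zero: "is_ideal I \<Longrightarrow> 0 \<in> I"
  unfolding is_ideal_def by auto

lemma ideal_add: "is_ideal I \<Longrightarrow> x \<in> I \<Longrightarrow> y \<in> I \<Longrightarrow> x + y \<in> I"
  unfolding is_ideal_def by auto

lemma ideal_mult_left: "is_ideal I \<Longrightarrow> x \<in> I \<Longrightarrow> r * x \<in> I"
  unfolding is_ideal_def by auto

lemma ideal_mult_right: "is_ideal I \<Longrightarrow> x \<in> I \<Longrightarrow> x * r \<in> I"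
  by (metis ideal_mult_left mult.commute)

lemma ideal_dvd: "is_ideal I \<Longrightarrow> x \<in> I \<Longrightarrow> x dvd y \<Longrightarrow> y \<in> I"
  by (metis dvdE ideal_mult_right)

lemma ideal_sum: "is_ideal I \<Longrightarrow> (\<And>i. i \<in> A \<Longrightarrow> f i \<in> I) \<Longrightarrow> sum f A \<in> I"
  by (induction A rule: infinite_finite_induct) (auto simp: ideal_zero ideal_add)

lemma is_ideal_colon: "is_ideal I \<Longrightarrow> is_ideal {x. \<forall>y\<in>Y. x * y \<in> I}"
  unfolding is_ideal_def by (auto simp: distrib_right mult.assoc)

lemma mult_mem_ideal_gen_products:
  assumes "x \<in> ideal_gen A" and "y \<in> ideal_gen B"
  shows "x * y \<in> ideal_gen {u * v | u v. u \<in> A \<and> v \<in> B}"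
proof -
  let ?G = "ideal_gen {u * v | u v. u \<in> A \<and> v \<in> B}"
  have "A \<subseteq> {u. \<forall>v\<in>ideal_gen B. u * v \<in> ?G}"
  proof safe
    fix u v assume u: "u \<in> A" and v: "v \<in> ideal_gen B"
    have "B \<subseteq> {v. \<forall>w\<in>{u}. v * w \<in> ?G}"
      using u subset_ideal_gen by (fastforce simp: mult.commute)
    then have "ideal_gen B \<subseteq> {v. \<forall>w\<in>{u}. v * w \<in> ?G}"
      by (rule ideal_gen_least[OF is_ideal_colon[OF is_ideal_ideal_gen]])
    then show "u * v \<in> ?G"
      using v by (auto simp: mult.commute)
  qed
  then have "ideal_gen A \<subseteq> {u. \<forall>v\<in>ideal_gen B. u * v \<in> ?G}"
    by (rule ideal_gen_least[OF is_ideal_colon[OF is_ideal_ideal_gen]])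
  then show ?thesis
    using assms by blast
qed

lemma mem_ideal_gen_image_imp_sum:
  fixes f :: "'b \<Rightarrow> 'a::comm_ring_1"
  assumes "finite I" and "x \<in> ideal_gen (f ` I)"
  shows "\<exists>c. x = (\<Sum>i\<in>I. c i * f i)"
proof -
  let ?L = "{y. \<exists>c. y = (\<Sum>i\<in>I. c i * f i)}"
  have "is_ideal ?L"
    unfolding is_ideal_def
  proof (intro conjI ballI allI; clarify)
    show "\<exists>c. 0 = (\<Sum>i\<in>I. c i * f i)"
      by (rule exI[of _ "\<lambda>_. 0"]) simp
    show "\<exists>c. (\<Sum>i\<in>I. c1 i * f i) + (\<Sum>i\<in>I. c2 i * f i) = (\<Sum>i\<in>I. c i * f i)" for c1 c2
      by (rule exI[of _ "\<lambda>i. c1 i + c2 i"]) (simp add: sum.distrib distrib_right)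
    show "\<exists>c. r * (\<Sum>i\<in>I. c1 i * f i) = (\<Sum>i\<in>I. c i * f i)" for r c1
      by (rule exI[of _ "\<lambda>i. r * c1 i"]) (simp add: sum_distrib_left mult.assoc)
  qed
  moreover have "f i \<in> ?L" if "i \<in> I" for i
  proof -
    have "(\<Sum>j\<in>I. (if j = i then 1 else 0) * f j) = (\<Sum>j\<in>I. if j = i then f j else 0)"
      by (rule sum.cong) simp_all
    also have "\<dots> = f i"
      using assms(1) that by simp
    finally show ?thesis
      unfolding mem_Collect_eq by (intro exI[of _ "\<lambda>j. if j = i then 1 else 0"]) (rule sym)
  qed
  ultimately have "ideal_gen (f ` I) \<subseteq> ?L"
    by (meson ideal_gen_least image_subsetI)
  then show ?thesis
    using assms(2) by blast
qed

lemma is_ideal_ideal_pow: "is_ideal (ideal_pow a n)"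
  by (cases n) (simp_all only: ideal_pow.simps is_ideal_ideal_gen, simp add: is_ideal_def)

lemma ideal_pow_antimono: "m \<le> n \<Longrightarrow> ideal_pow a n \<subseteq> ideal_pow a m"
proof (induction n rule: dec_induct)
  case (step n)
  have "ideal_pow a (Suc n) \<subseteq> ideal_pow a n"
    by (simp only: ideal_pow.simps, rule ideal_gen_least[OF is_ideal_ideal_pow])
      (auto intro: ideal_mult_left is_ideal_ideal_pow)
  with step.IH show ?case by blast
qed simp

lemma ideal_pow_1:
  assumes "is_ideal a"
  shows "ideal_pow a 1 = a"
proof -
  have "{x * y | x y. x \<in> a \<and> y \<in> ideal_pow a 0} = a"
    using ideal_mult_right[OF assms] by (auto, metis mult_1_right)
  then show ?thesis
    using ideal_gen_of_ideal[OF assms] by simp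
qed

lemma ideal_pow_mult:
  assumes "x \<in> ideal_pow a m" and "y \<in> ideal_pow a n"
  shows "x * y \<in> ideal_pow a (m + n)"
  using assms
proof (induction m arbitrary: x y)
  case 0
  then show ?case
    by (simp add: ideal_mult_left is_ideal_ideal_pow)
next
  case (Suc m)
  have "x * y \<in> ideal_gen {z * w | z w. z \<in> {u * v | u v. u \<in> a \<and> v \<in> ideal_pow a m}
                                         \<and> w \<in> ideal_pow a n}"
    using Suc.prems
    by (intro mult_mem_ideal_gen_products) (simp_all add: ideal_gen_of_ideal is_ideal_ideal_pow)
  also have "\<dots> \<subseteq> ideal_pow a (Suc (m + n))"
    unfolding ideal_pow.simps using Suc.IH by (intro ideal_gen_mono) (fastforce simp: mult.assoc)
  finally show ?case
    by simp
qed

lemma power_mem_ideal_pow_mult: "x \<in> ideal_pow a m \<Longrightarrow> x ^ k \<in> ideal_pow a (k * m)"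
  by (induction k) (auto simp: ideal_pow_mult)

lemma power_mem_ideal_pow: "is_ideal a \<Longrightarrow> x \<in> a \<Longrightarrow> x ^ k \<in> ideal_pow a k"
  using power_mem_ideal_pow_mult[of x a 1 k] ideal_pow_1 by auto

lemma radical_mono: "B \<subseteq> B' \<Longrightarrow> radical B \<subseteq> radical B'"
  unfolding radical_def by auto

lemma frob_pow_eq_image: "frob_pow B q = ideal_gen ((\<lambda>x. x ^ q) ` B)"
  unfolding frob_pow_def Setcompr_eq_image ..

lemma is_ideal_frob_pow: "is_ideal (frob_pow B q)"
  unfolding frob_pow_def by (rule is_ideal_ideal_gen)

lemma power_mem_frob_pow: "x \<in> B \<Longrightarrow> x ^ q \<in> frob_pow B q"
  unfolding frob_pow_def by (rule subsetD[OF subset_ideal_gen]) blast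

lemma frob_pow_mono: "B \<subseteq> B' \<Longrightarrow> frob_pow B q \<subseteq> frob_pow B' q"
  unfolding frob_pow_eq_image by (intro ideal_gen_mono image_mono)

lemma frob_pow_1: "is_ideal B \<Longrightarrow> frob_pow B 1 = B"
  unfolding frob_pow_eq_image by (simp add: ideal_gen_of_ideal)

lemma radical_subset_radical_frob_pow: "radical B \<subseteq> radical (frob_pow B q)"
  unfolding radical_def by (auto, metis power_mem_frob_pow power_mult)

definition monomials :: "'a::comm_ring_1 set \<Rightarrow> nat \<Rightarrow> 'a set" where
  "monomials S n = {\<Prod>s\<in>S. s ^ \<alpha> s | \<alpha>. (\<Sum>s\<in>S. \<alpha> s) = n}"

lemma mult_mem_monomials:
  assumes S: "finite S" "s \<in> S" and "m \<in> monomials S n"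
  shows "s * m \<in> monomials S (Suc n)"
proof -
  obtain \<alpha> where m: "m = (\<Prod>t\<in>S. t ^ \<alpha> t)" and n: "(\<Sum>t\<in>S. \<alpha> t) = n"
    using assms(3) unfolding monomials_def by blast
  define \<beta> where "\<beta> = \<alpha>(s := Suc (\<alpha> s))"
  have "(\<Prod>t\<in>S - {s}. t ^ \<beta> t) = (\<Prod>t\<in>S - {s}. t ^ \<alpha> t)"
    by (rule prod.cong) (auto simp: \<beta>_def)
  then have "(\<Prod>t\<in>S. t ^ \<beta> t) = s * m"
    unfolding m prod.remove[OF S] by (simp add: \<beta>_def mult.assoc)
  moreover have "(\<Sum>t\<in>S - {s}. \<beta> t) = (\<Sum>t\<in>S - {s}. \<alpha> t)"
    by (rule sum.cong) (auto simp: \<beta>_def)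
  then have "(\<Sum>t\<in>S. \<beta> t) = Suc n"
    unfolding n[symmetric] sum.remove[OF S] by (simp add: \<beta>_def)
  ultimately show ?thesis
    unfolding monomials_def by (auto intro!: exI[of _ \<beta>])
qed

lemma ideal_pow_subset_monomials:
  assumes "finite S"
  shows "ideal_pow (ideal_gen S) n \<subseteq> ideal_gen (monomials S n)"
proof (induction n)
  case 0
  have "1 \<in> monomials S 0"
    unfolding monomials_def by (auto intro!: exI[of _ "\<lambda>_. 0"])
  then have "x * 1 \<in> ideal_gen (monomials S 0)" for x
    by (meson ideal_mult_left is_ideal_ideal_gen subset_ideal_gen subsetD)
  then show ?case
    by auto
next
  case (Suc n)
  have "x * y \<in> ideal_gen (monomials S (Suc n))"
    if "x \<in> ideal_gen S" and "y \<in> ideal_gen (monomials S n)" for x y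
  proof -
    have "x * y \<in> ideal_gen {u * v | u v. u \<in> S \<and> v \<in> monomials S n}"
      using that by (rule mult_mem_ideal_gen_products)
    also have "\<dots> \<subseteq> ideal_gen (monomials S (Suc n))"
      using mult_mem_monomials[OF assms] by (auto intro!: ideal_gen_mono)
    finally show ?thesis .
  qed
  then show ?case
    using Suc.IH by (auto intro!: ideal_gen_least[OF is_ideal_ideal_gen])
qed

lemma monomial_mem_ideal_pow:
  assumes "finite S" and "S \<subseteq> a" and "is_ideal a"
  shows "(\<Prod>s\<in>S. s ^ \<alpha> s) \<in> ideal_pow a (\<Sum>s\<in>S. \<alpha> s)"
  using assms(1,2)
proof (induction S rule: finite_induct)
  case (insert s S)
  then show ?case
    using power_mem_ideal_pow[OF assms(3)] by (simp add: ideal_pow_mult)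
qed simp

lemma power_dvd_monomial:
  fixes S :: "'a::comm_ring_1 set"
  assumes "finite S" and "s \<in> S" and "q \<le> \<alpha> s"
  shows "s ^ q dvd (\<Prod>t\<in>S. t ^ \<alpha> t)"
  unfolding prod.remove[OF assms(1,2)] by (rule dvd_mult2[OF le_imp_power_dvd[OF assms(3)]])

lemma le_sum_div:
  fixes \<alpha> :: "'b \<Rightarrow> nat"
  assumes "0 < q" and "(k + card S) * q \<le> (\<Sum>t\<in>S. \<alpha> t)"
  shows "k \<le> (\<Sum>t\<in>S. \<alpha> t div q)"
proof -
  have "\<alpha> t \<le> q * (\<alpha> t div q) + q" for t
    using mult_div_mod_eq[of q "\<alpha> t"] mod_less_divisor[OF assms(1), of "\<alpha> t"] by linarith
  then have "(\<Sum>t\<in>S. \<alpha> t) \<le> (\<Sum>t\<in>S. q * (\<alpha> t div q) + q)"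
    by (rule sum_mono)
  also have "\<dots> = (\<Sum>t\<in>S. \<alpha> t div q) * q + card S * q"
    by (simp add: sum.distrib sum_distrib_left mult.commute)
  finally have "k * q \<le> (\<Sum>t\<in>S. \<alpha> t div q) * q"
    using assms(2) unfolding add_mult_distrib by linarith
  then show ?thesis
    using assms(1) by simp
qed

lemma ideal_pow_subset_frob_pow_ideal_pow:
  assumes "finite S" and "0 < q" and "(k + card S) * q \<le> n"
  shows "ideal_pow (ideal_gen S) n \<subseteq> frob_pow (ideal_pow (ideal_gen S) k) q"
proof -
  let ?a = "ideal_gen S"
  have "y \<in> frob_pow (ideal_pow ?a k) q" if "y \<in> monomials S n" for y
  proof -
    obtain \<alpha> where y: "y = (\<Prod>t\<in>S. t ^ \<alpha> t)" and n: "(\<Sum>t\<in>S. \<alpha> t) = n"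
      using \<open>y \<in> monomials S n\<close> unfolding monomials_def by blast
    define m where "m = (\<Prod>t\<in>S. t ^ (\<alpha> t div q))"
    have "m \<in> ideal_pow ?a (\<Sum>t\<in>S. \<alpha> t div q)"
      unfolding m_def using assms(1) subset_ideal_gen is_ideal_ideal_gen
      by (rule monomial_mem_ideal_pow)
    also have "\<dots> \<subseteq> ideal_pow ?a k"
      using assms n by (intro ideal_pow_antimono le_sum_div) simp_all
    finally have "m ^ q \<in> frob_pow (ideal_pow ?a k) q"
      by (rule power_mem_frob_pow)
    moreover have "m ^ q dvd y"
      unfolding m_def y prod_power_distrib
      by (rule prod_dvd_prod) (simp add: le_imp_power_dvd flip: power_mult)
    ultimately show ?thesis
      by (rule ideal_dvd[OF is_ideal_frob_pow])
  qed
  then have "ideal_gen (monomials S n) \<subseteq> frob_pow (ideal_pow ?a k) q"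
    by (intro ideal_gen_least[OF is_ideal_frob_pow] subsetI)
  with ideal_pow_subset_monomials[OF assms(1)] show ?thesis
    by blast
qed

lemma ideal_pow_subset_if_powers_mem:
  assumes "finite S" and "is_ideal B" and "\<forall>s\<in>S. s ^ q \<in> B"
  shows "ideal_pow (ideal_gen S) (card S * q + 1) \<subseteq> B"
proof -
  have "y \<in> B" if y_mem: "y \<in> monomials S (card S * q + 1)" for y
  proof -
    obtain \<alpha> where y: "y = (\<Prod>t\<in>S. t ^ \<alpha> t)" and n: "(\<Sum>t\<in>S. \<alpha> t) = card S * q + 1"
      using y_mem unfolding monomials_def by blast
    have "\<exists>s\<in>S. q \<le> \<alpha> s"
    proof (rule ccontr)
      assume "\<not> (\<exists>s\<in>S. q \<le> \<alpha> s)"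
      then have "(\<Sum>t\<in>S. \<alpha> t) \<le> (\<Sum>t\<in>S. q)"
        by (intro sum_mono) auto
      then show False
        using n by simp
    qed
    then obtain s where s: "s \<in> S" and "q \<le> \<alpha> s"
      by blast
    then have "s ^ q dvd y"
      unfolding y by (rule power_dvd_monomial[OF assms(1)])
    then show "y \<in> B"
      using assms(3) s by (blast intro: ideal_dvd[OF assms(2)])
  qed
  then show ?thesis
    using ideal_pow_subset_monomials[OF assms(1)] ideal_gen_least[OF assms(2)] by blast
qed

lemma ex_ideal_pow_subset_if_subset_radical:
  assumes "finite S" and "is_ideal B" and "ideal_gen S \<subseteq> radical B"
  shows "\<exists>N. ideal_pow (ideal_gen S) N \<subseteq> B"
proof -
  have "\<forall>s\<in>S. \<exists>n. s ^ n \<in> B"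
    using assms(3) subset_ideal_gen[of S] unfolding radical_def by auto
  then obtain f where f: "\<forall>s\<in>S. s ^ f s \<in> B"
    by metis
  have "s ^ (\<Sum>t\<in>S. f t) \<in> B" if "s \<in> S" for s
  proof -
    have "f s \<le> (\<Sum>t\<in>S. f t)"
      by (rule member_le_sum[OF that _ assms(1)]) simp
    then show ?thesis
      using f that by (blast intro: ideal_dvd[OF assms(2)] le_imp_power_dvd)
  qed
  then show ?thesis
    using ideal_pow_subset_if_powers_mem[OF assms(1,2)] by blast
qed

definition max_pow_not_subset :: "'a::comm_ring_1 set \<Rightarrow> 'a set \<Rightarrow> nat" where
  "max_pow_not_subset a B = Sup {m. \<not> ideal_pow a m \<subseteq> B}"

lemma nu_eq_max_pow_not_subset: "nu b a p e = max_pow_not_subset a (frob_pow b (p ^ e))"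
  unfolding nu_def max_pow_not_subset_def ..

lemma bJ_eq_max_pow_not_subset: "bJ J a p e = max_pow_not_subset a (J_e J p e)"
  unfolding bJ_def max_pow_not_subset_def ..

lemma max_pow_not_subset_UNIV: "max_pow_not_subset a UNIV = 0"
  unfolding max_pow_not_subset_def by simp

lemma not_subset_ideal_pow_iff:
  assumes "ideal_pow a N \<subseteq> B" and "B \<noteq> UNIV"
  shows "\<not> ideal_pow a m \<subseteq> B \<longleftrightarrow> m \<le> max_pow_not_subset a B"
proof -
  let ?X = "{m. \<not> ideal_pow a m \<subseteq> B}"
  have "?X \<subseteq> {..<N}"
    using assms(1) ideal_pow_antimono by (fastforce simp: not_less)
  then have fin: "finite ?X"
    by (rule finite_subset) simp
  have "0 \<in> ?X"
    using assms(2) by auto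
  then have nonempty: "?X \<noteq> {}"
    by blast
  have "Sup ?X \<in> ?X" and "\<forall>m\<in>?X. m \<le> Sup ?X"
    using Max_in[OF fin nonempty] Max_ge[OF fin] by (simp_all add: cSup_eq_Max[OF fin nonempty])
  then show ?thesis
    unfolding max_pow_not_subset_def using ideal_pow_antimono by blast
qed

lemma le_max_pow_not_subset:
  "ideal_pow a N \<subseteq> B \<Longrightarrow> \<not> ideal_pow a m \<subseteq> B \<Longrightarrow> m \<le> max_pow_not_subset a B"
  using not_subset_ideal_pow_iff by blast

lemma ideal_pow_Suc_max_pow_not_subset:
  "ideal_pow a N \<subseteq> B \<Longrightarrow> ideal_pow a (Suc (max_pow_not_subset a B)) \<subseteq> B"
  using le_max_pow_not_subset Suc_n_not_le_n by blast

lemma max_pow_not_subset_le: "ideal_pow a N \<subseteq> B \<Longrightarrow> max_pow_not_subset a B \<le> N"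
  by (metis max_pow_not_subset_UNIV not_subset_ideal_pow_iff nat_le_linear le_zero_eq)

lemma max_pow_not_subset_antimono:
  assumes "ideal_pow a N \<subseteq> B" and "B \<subseteq> B'"
  shows "max_pow_not_subset a B' \<le> max_pow_not_subset a B"
proof (cases "B' = UNIV")
  case False
  then have "\<not> ideal_pow a (max_pow_not_subset a B') \<subseteq> B'"
    using not_subset_ideal_pow_iff[of a N B'] assms by blast
  then show ?thesis
    using assms by (blast intro: le_max_pow_not_subset)
qed (simp add: max_pow_not_subset_UNIV)

lemma frob_pow_ideal_gen:
  fixes S :: "'a::comm_ring_1 set"
  assumes "prime CHAR('a)" and "q = CHAR('a) ^ e"
  shows "frob_pow (ideal_gen S) q = ideal_gen ((\<lambda>s. s ^ q) ` S)"
proof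
  let ?G = "ideal_gen ((\<lambda>s. s ^ q) ` S)"
  have "q > 0"
    using assms prime_gt_0_nat by simp
  then have "is_ideal {x. x ^ q \<in> ?G}"
    unfolding is_ideal_def
    by (auto simp: freshmans_dream'[OF assms] power_mult_distrib zero_power
        intro: ideal_add ideal_mult_left ideal_zero is_ideal_ideal_gen)
  then have "ideal_gen S \<subseteq> {x. x ^ q \<in> ?G}"
    by (rule ideal_gen_least) (auto intro: subsetD[OF subset_ideal_gen])
  then show "frob_pow (ideal_gen S) q \<subseteq> ?G"
    unfolding frob_pow_eq_image by (intro ideal_gen_least[OF is_ideal_ideal_gen]) blast
  show "?G \<subseteq> frob_pow (ideal_gen S) q"
    unfolding frob_pow_eq_image by (intro ideal_gen_mono image_mono subset_ideal_gen)
qed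

lemma frob_pow_frob_pow:
  fixes B :: "'a::comm_ring_1 set"
  assumes "prime CHAR('a)"
  shows "frob_pow (frob_pow B (CHAR('a) ^ e)) (CHAR('a) ^ f) = frob_pow B (CHAR('a) ^ (e + f))"
  unfolding frob_pow_eq_image[of B] frob_pow_ideal_gen[OF assms refl] image_image
  by (simp add: power_add power_mult)

lemma frob_hom_0: "frob_hom q \<phi> \<Longrightarrow> \<phi> 0 = 0"
  unfolding frob_hom_def by (metis add_cancel_right_right add_0)

lemma frob_hom_mult_left: "frob_hom q \<phi> \<Longrightarrow> frob_hom q (\<lambda>x. \<phi> (r * x))"
  unfolding frob_hom_def by (metis distrib_left mult.left_commute)

lemma frob_hom_comp_power:
  fixes \<phi> :: "'a::comm_ring_1 \<Rightarrow> 'a"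
  assumes "prime CHAR('a)" and "frob_hom (CHAR('a) ^ (e + f)) \<phi>"
  shows "frob_hom (CHAR('a) ^ e) (\<lambda>x. \<phi> (x ^ CHAR('a) ^ f))"
  using assms(2) unfolding frob_hom_def
  by (simp add: freshmans_dream'[OF assms(1)] power_mult_distrib power_add flip: power_mult)

lemma is_ideal_J_e:
  fixes J :: "'a::comm_ring_1 set"
  assumes "is_ideal J"
  shows "is_ideal (J_e J p e)"
  unfolding is_ideal_def J_e_def
proof (intro conjI ballI allI; clarify)
  fix \<phi> :: "'a \<Rightarrow> 'a" assume "frob_hom (p ^ e) \<phi>"
  then show "\<phi> 0 \<in> J"
    using assms by (simp add: frob_hom_0 ideal_zero)
next
  fix x y and \<phi> :: "'a \<Rightarrow> 'a"
  assume "\<forall>\<phi>. frob_hom (p ^ e) \<phi> \<longrightarrow> \<phi> x \<in> J" and "\<forall>\<phi>. frob_hom (p ^ e) \<phi> \<longrightarrow> \<phi> y \<in> J"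
    and "frob_hom (p ^ e) \<phi>"
  then show "\<phi> (x + y) \<in> J"
    using assms by (simp add: frob_hom_def ideal_add)
next
  fix r x and \<phi> :: "'a \<Rightarrow> 'a"
  assume "\<forall>\<phi>. frob_hom (p ^ e) \<phi> \<longrightarrow> \<phi> x \<in> J" and "frob_hom (p ^ e) \<phi>"
  then show "\<phi> (r * x) \<in> J"
    using frob_hom_mult_left by blast
qed

lemma frob_pow_subset_J_e:
  assumes "is_ideal J"
  shows "frob_pow J (p ^ e) \<subseteq> J_e J p e"
  unfolding frob_pow_eq_image
proof (rule ideal_gen_least[OF is_ideal_J_e[OF assms]], clarify)
  fix x assume "x \<in> J"
  have "\<phi> (x ^ p ^ e) \<in> J" if "frob_hom (p ^ e) \<phi>" for \<phi>
    using that \<open>x \<in> J\<close> ideal_mult_right[OF assms] unfolding frob_hom_def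
    by (metis mult.right_neutral)
  then show "x ^ p ^ e \<in> J_e J p e"
    unfolding J_e_def by blast
qed

lemma frob_pow_J_e_subset:
  fixes J :: "'a::comm_ring_1 set"
  assumes "prime CHAR('a)" and "is_ideal J"
  shows "frob_pow (J_e J CHAR('a) e) (CHAR('a) ^ f) \<subseteq> J_e J CHAR('a) (e + f)"
  unfolding frob_pow_eq_image
proof (rule ideal_gen_least[OF is_ideal_J_e[OF assms(2)]], clarify)
  fix x assume "x \<in> J_e J CHAR('a) e"
  then show "x ^ CHAR('a) ^ f \<in> J_e J CHAR('a) (e + f)"
    unfolding J_e_def using frob_hom_comp_power[OF assms(1)] by blast
qed

lemma F_pure_mem_if_power_mem_frob_pow:
  fixes K :: "'a::comm_ring_1 set"
  assumes "prime CHAR('a)" and "noetherian_ring TYPE('a)" and "F_pure TYPE('a) CHAR('a)"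
    and "is_ideal K" and "x ^ CHAR('a) \<in> frob_pow K CHAR('a)"
  shows "x \<in> K"
proof -
  let ?p = "CHAR('a)"
  obtain T where "finite T" and K: "K = ideal_gen T"
    using assms(2,4) unfolding noetherian_ring_def by blast
  then obtain m :: nat and h where T: "T = h ` {..<m}"
    unfolding lessThan_def finite_conv_nat_seg_image by blast
  have "frob_pow K ?p = ideal_gen ((\<lambda>j. h j ^ ?p) ` {..<m})"
    unfolding K T using frob_pow_ideal_gen[OF assms(1), of ?p 1] by (simp add: image_image)
  with assms(5) have "x ^ ?p \<in> ideal_gen ((\<lambda>j. h j ^ ?p) ` {..<m})"
    by simp
  then obtain c where "x ^ ?p = (\<Sum>j<m. c j * h j ^ ?p)"
    using mem_ideal_gen_image_imp_sum[OF finite_lessThan] by blast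
  then have "\<exists>y. \<forall>i<(1::nat). (\<Sum>j<m. h j ^ ?p * y j) = x ^ ?p"
    by (intro exI[of _ c]) (simp add: mult.commute)
  then obtain z where "\<forall>i<(1::nat). (\<Sum>j<m. h j * z j) = x"
    using assms(3)[unfolded F_pure_def, rule_format, where n = 1 and A = "\<lambda>i j. h j"
        and b = "\<lambda>i. x"] by blast
  then have "x = (\<Sum>j<m. h j * z j)"
    by simp
  also have "\<dots> \<in> K"
  proof (rule ideal_sum[OF assms(4)])
    fix j assume "j \<in> {..<m}"
    then have "h j \<in> K"
      unfolding K T by (rule subsetD[OF subset_ideal_gen imageI])
    then show "h j * z j \<in> K"
      by (rule ideal_mult_right[OF assms(4)])
  qed
  finally show ?thesis .
qed

locale F_pure_threshold =
  fixes a S :: "'a::comm_ring_1 set" and p :: nat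
  assumes prime_p: "prime p" and CHAR_eq: "CHAR('a) = p"
    and noetherian: "noetherian_ring TYPE('a)" and F_pure: "F_pure TYPE('a) p"
    and finite_S: "finite S" and a_eq: "a = ideal_gen S"
begin

lemma prime_CHAR: "prime CHAR('a)"
  using prime_p CHAR_eq by simp

lemma real_p_gt_1: "1 < real p"
  using prime_gt_1_nat[OF prime_p] by simp

lemma frob_pow_p_power:
  "frob_pow (frob_pow (B :: 'a set) (p ^ e)) (p ^ f) = frob_pow B (p ^ (e + f))"
  using frob_pow_frob_pow[OF prime_CHAR] by (simp add: CHAR_eq)

lemma ex_ideal_pow_subset_frob_pow:
  assumes "a \<subseteq> radical B"
  shows "\<exists>N. ideal_pow a N \<subseteq> frob_pow B q"
  using assms radical_subset_radical_frob_pow[of B q] unfolding a_eq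
  by (intro ex_ideal_pow_subset_if_subset_radical[OF finite_S is_ideal_frob_pow]) blast

lemma nu_Suc_ge:
  assumes "a \<subseteq> radical B"
  shows "p * nu B a p e \<le> nu B a p (Suc e)"
proof -
  let ?X = "frob_pow B (p ^ e)"
  obtain N where N: "ideal_pow a N \<subseteq> ?X"
    using ex_ideal_pow_subset_frob_pow[OF assms] by blast
  obtain N' where N': "ideal_pow a N' \<subseteq> frob_pow B (p ^ Suc e)"
    using ex_ideal_pow_subset_frob_pow[OF assms] by blast
  show ?thesis
  proof (cases "?X = UNIV")
    case True
    then show ?thesis
      by (simp add: nu_eq_max_pow_not_subset max_pow_not_subset_UNIV)
  next
    case False
    then obtain x where x: "x \<in> ideal_pow a (nu B a p e)" and "x \<notin> ?X"
      using not_subset_ideal_pow_iff[OF N False] unfolding nu_eq_max_pow_not_subset by blast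
    then have "x ^ p \<notin> frob_pow ?X p"
      using F_pure_mem_if_power_mem_frob_pow[OF prime_CHAR noetherian _ is_ideal_frob_pow]
        F_pure by (auto simp: CHAR_eq)
    moreover have "frob_pow ?X p = frob_pow B (p ^ Suc e)"
      using frob_pow_p_power[of B e 1] by simp
    moreover have "x ^ p \<in> ideal_pow a (p * nu B a p e)"
      using x by (rule power_mem_ideal_pow_mult)
    ultimately have "\<not> ideal_pow a (p * nu B a p e) \<subseteq> frob_pow B (p ^ Suc e)"
      by blast
    then show ?thesis
      unfolding nu_eq_max_pow_not_subset[of B a p "Suc e"] by (rule le_max_pow_not_subset[OF N'])
  qed
qed

lemma nu_le:
  assumes "a \<subseteq> radical B"
  shows "nu B a p e \<le> (nu B a p 0 + 1 + card S) * p ^ e"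
proof -
  let ?B0 = "frob_pow B (p ^ 0)"
  obtain N where N: "ideal_pow a N \<subseteq> ?B0"
    using ex_ideal_pow_subset_frob_pow[OF assms] by blast
  have "ideal_pow a ((nu B a p 0 + 1 + card S) * p ^ e)
      \<subseteq> frob_pow (ideal_pow a (Suc (nu B a p 0))) (p ^ e)"
    unfolding a_eq using finite_S prime_gt_0_nat[OF prime_p]
    by (intro ideal_pow_subset_frob_pow_ideal_pow) simp_all
  also have "\<dots> \<subseteq> frob_pow ?B0 (p ^ e)"
    unfolding nu_eq_max_pow_not_subset
    by (intro frob_pow_mono ideal_pow_Suc_max_pow_not_subset[OF N])
  also have "\<dots> = frob_pow B (p ^ e)"
    using frob_pow_p_power[of B 0 e] by simp
  finally show ?thesis
    unfolding nu_eq_max_pow_not_subset[of B a p e] by (rule max_pow_not_subset_le)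
qed

lemma nu_antimono:
  assumes "a \<subseteq> radical B" and "B \<subseteq> B'"
  shows "nu B' a p e \<le> nu B a p e"
proof -
  obtain N where "ideal_pow a N \<subseteq> frob_pow B (p ^ e)"
    using ex_ideal_pow_subset_frob_pow[OF assms(1)] by blast
  then show ?thesis
    unfolding nu_eq_max_pow_not_subset
    using frob_pow_mono[OF assms(2)] by (rule max_pow_not_subset_antimono)
qed

lemma incseq_nu_quotient:
  assumes "a \<subseteq> radical B"
  shows "incseq (\<lambda>e. real (nu B a p e) / real p ^ e)"
proof (rule incseq_SucI)
  fix e
  have "real p * real (nu B a p e) \<le> real (nu B a p (Suc e))"
    using nu_Suc_ge[OF assms, of e] by (simp flip: of_nat_mult)
  then show "real (nu B a p e) / real p ^ e \<le> real (nu B a p (Suc e)) / real p ^ Suc e"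
    using real_p_gt_1 by (simp add: field_simps)
qed

lemma nu_quotient_le:
  assumes "a \<subseteq> radical B"
  shows "real (nu B a p e) / real p ^ e \<le> real (nu B a p 0) + 1 + card S"
proof -
  have "real (nu B a p e) \<le> real ((nu B a p 0 + 1 + card S) * p ^ e)"
    using nu_le[OF assms] by (simp only: of_nat_le_iff)
  then have "real (nu B a p e) \<le> (real (nu B a p 0) + 1 + card S) * real p ^ e"
    by (simp add: algebra_simps)
  then show ?thesis
    using real_p_gt_1 by (simp add: divide_le_eq)
qed

lemma nu_quotient_tendsto_fthr:
  assumes "a \<subseteq> radical B"
  shows "(\<lambda>e. real (nu B a p e) / real p ^ e) \<longlonglongrightarrow> fthr B a p"
proof -
  obtain L where "(\<lambda>e. real (nu B a p e) / real p ^ e) \<longlonglongrightarrow> L"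
    using incseq_convergent[OF incseq_nu_quotient[OF assms]] nu_quotient_le[OF assms] by blast
  moreover from this have "fthr B a p = L"
    unfolding fthr_def by (rule limI)
  ultimately show ?thesis
    by simp
qed

lemma nu_quotient_le_fthr:
  "a \<subseteq> radical B \<Longrightarrow> real (nu B a p e) / real p ^ e \<le> fthr B a p"
  using incseq_le[OF incseq_nu_quotient nu_quotient_tendsto_fthr] .

lemma fthr_le:
  "a \<subseteq> radical B \<Longrightarrow> fthr B a p \<le> real (nu B a p 0) + 1 + card S"
  using LIMSEQ_le_const2[OF nu_quotient_tendsto_fthr] nu_quotient_le by blast

lemma fthr_antimono:
  assumes "a \<subseteq> radical B" and "B \<subseteq> B'"
  shows "fthr B' a p \<le> fthr B a p"
proof (rule LIMSEQ_le[OF nu_quotient_tendsto_fthr nu_quotient_tendsto_fthr])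
  show "a \<subseteq> radical B'"
    using assms radical_mono by blast
  show "\<exists>N. \<forall>e\<ge>N. real (nu B' a p e) / real p ^ e \<le> real (nu B a p e) / real p ^ e"
    using nu_antimono[OF assms] real_p_gt_1 by (auto intro!: divide_right_mono)
qed fact

lemma fthr_frob_pow:
  assumes "a \<subseteq> radical B"
  shows "fthr (frob_pow B (p ^ e)) a p = real p ^ e * fthr B a p"
proof -
  have "nu (frob_pow B (p ^ e)) a p f = nu B a p (f + e)" for f
    unfolding nu_eq_max_pow_not_subset frob_pow_p_power by (simp add: add.commute)
  then have "(\<lambda>f. real (nu (frob_pow B (p ^ e)) a p f) / real p ^ f)
      = (\<lambda>f. real p ^ e * (real (nu B a p (f + e)) / real p ^ (f + e)))"
    using real_p_gt_1 by (auto simp: power_add)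
  moreover have "\<dots> \<longlonglongrightarrow> real p ^ e * fthr B a p"
    using LIMSEQ_ignore_initial_segment[OF nu_quotient_tendsto_fthr[OF assms]]
    by (rule tendsto_mult_left)
  moreover have "a \<subseteq> radical (frob_pow B (p ^ e))"
    using assms radical_subset_radical_frob_pow by blast
  ultimately show ?thesis
    using nu_quotient_tendsto_fthr LIMSEQ_unique by metis
qed

lemma subset_radical_J_e:
  assumes "is_ideal J" and "a \<subseteq> radical J"
  shows "a \<subseteq> radical (J_e J p e)"
  using assms(2) radical_subset_radical_frob_pow[of J "p ^ e"]
    radical_mono[OF frob_pow_subset_J_e[OF assms(1)]] by blast

lemma bJ_eq_nu_J_e:
  assumes "is_ideal J"
  shows "bJ J a p e = nu (J_e J p e) a p 0"
  unfolding bJ_eq_max_pow_not_subset nu_eq_max_pow_not_subset power_0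
    frob_pow_1[OF is_ideal_J_e[OF assms]] ..

lemma fthr_J_e_Suc_le:
  assumes "is_ideal J" and "a \<subseteq> radical J"
  shows "fthr (J_e J p (Suc e)) a p \<le> real p * fthr (J_e J p e) a p"
proof -
  have "frob_pow (J_e J p e) (p ^ 1) \<subseteq> J_e J p (Suc e)"
    using frob_pow_J_e_subset[OF prime_CHAR assms(1), of e 1] by (simp add: CHAR_eq)
  then have "fthr (J_e J p (Suc e)) a p \<le> fthr (frob_pow (J_e J p e) (p ^ 1)) a p"
    using subset_radical_J_e[OF assms] radical_subset_radical_frob_pow
    by (blast intro: fthr_antimono)
  also have "\<dots> = real p * fthr (J_e J p e) a p"
    using fthr_frob_pow[OF subset_radical_J_e[OF assms, of e], of 1] by simp
  finally show ?thesis .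
qed

lemma fthr_J_e_le_fthr:
  assumes "is_ideal J" and "a \<subseteq> radical J"
  shows "fthr (J_e J p e) a p \<le> real p ^ e * fthr J a p"
proof -
  have "fthr (J_e J p e) a p \<le> fthr (frob_pow J (p ^ e)) a p"
    using assms(2) radical_subset_radical_frob_pow frob_pow_subset_J_e[OF assms(1)]
    by (blast intro: fthr_antimono)
  then show ?thesis
    using fthr_frob_pow[OF assms(2)] by simp
qed

lemma decseq_J_e_quotient:
  assumes "is_ideal J" and "a \<subseteq> radical J"
  shows "decseq (\<lambda>e. fthr (J_e J p e) a p / real p ^ e)"
proof (rule decseq_SucI)
  fix e
  show "fthr (J_e J p (Suc e)) a p / real p ^ Suc e \<le> fthr (J_e J p e) a p / real p ^ e"
    using fthr_J_e_Suc_le[OF assms, of e] real_p_gt_1 by (simp add: field_simps)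
qed

lemma J_e_quotient_tendsto_ct:
  assumes "is_ideal J" and "a \<subseteq> radical J"
  shows "(\<lambda>e. fthr (J_e J p e) a p / real p ^ e) \<longlonglongrightarrow> ct J a p"
proof -
  let ?\<gamma> = "\<lambda>e. fthr (J_e J p e) a p / real p ^ e"
  let ?\<beta> = "\<lambda>e. real (bJ J a p e) / real p ^ e"
  have bJ_le: "real (bJ J a p e) \<le> fthr (J_e J p e) a p" for e
    using nu_quotient_le_fthr[OF subset_radical_J_e[OF assms], of e 0]
    by (simp add: bJ_eq_nu_J_e[OF assms(1)])
  have le_bJ: "fthr (J_e J p e) a p \<le> real (bJ J a p e) + (1 + card S)" for e
    using fthr_le[OF subset_radical_J_e[OF assms], of e] by (simp add: bJ_eq_nu_J_e[OF assms(1)])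
  have "0 \<le> ?\<gamma> e" for e
    using bJ_le[of e] by (simp add: order_trans[OF of_nat_0_le_iff])
  then obtain L where \<gamma>: "?\<gamma> \<longlonglongrightarrow> L"
    using decseq_convergent[OF decseq_J_e_quotient[OF assms]] by blast
  have "?\<beta> \<longlonglongrightarrow> L"
  proof (rule tendsto_sandwich[OF _ _ _ \<gamma>])
    show "(\<lambda>e. ?\<gamma> e - (1 + card S) / real p ^ e) \<longlonglongrightarrow> L"
      using tendsto_diff[OF \<gamma> LIMSEQ_divide_realpow_zero[OF real_p_gt_1]] by simp
    have "?\<gamma> e - (1 + card S) / real p ^ e \<le> ?\<beta> e" for e
      unfolding diff_divide_distrib[symmetric]
      by (rule divide_right_mono) (use le_bJ[of e] in simp_all)
    then show "\<forall>\<^sub>F e in sequentially. ?\<gamma> e - (1 + card S) / real p ^ e \<le> ?\<beta> e"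
      by simp
    show "\<forall>\<^sub>F e in sequentially. ?\<beta> e \<le> ?\<gamma> e"
      using bJ_le by (intro always_eventually allI divide_right_mono) simp_all
  qed
  then have "ct J a p = L"
    unfolding ct_def by (rule limI)
  with \<gamma> show ?thesis
    by simp
qed

end

theorem mainTheorem18:
  fixes a J :: "'a::comm_ring_1 set" and p :: nat
  assumes "prime p" and "CHAR('a) = p"
    and "noetherian_ring TYPE('a)"
    and "F_finite TYPE('a) p" and "F_pure TYPE('a) p"
    and "is_ideal a" and "is_ideal J" and "a \<subseteq> radical J"
  shows "ct J a p = fthr J a p \<longleftrightarrow>
         (\<forall>e::nat. fthr (J_e J p e) a p = fthr (frob_pow J (p ^ e)) a p)"
proof -
  obtain S where "finite S" and "a = ideal_gen S"
    using assms(3,6) unfolding noetherian_ring_def by blast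
  then interpret F_pure_threshold a S p
    using assms by unfold_locales
  let ?\<gamma> = "\<lambda>e. fthr (J_e J p e) a p / real p ^ e"
  have \<gamma>: "?\<gamma> \<longlonglongrightarrow> ct J a p" and "decseq ?\<gamma>"
    using J_e_quotient_tendsto_ct decseq_J_e_quotient assms(7,8) by blast+
  then have ct_le: "real p ^ e * ct J a p \<le> fthr (J_e J p e) a p" for e
    using decseq_ge[of ?\<gamma>] real_p_gt_1 by (simp add: field_simps)
  have frob: "fthr (frob_pow J (p ^ e)) a p = real p ^ e * fthr J a p" for e
    using fthr_frob_pow[OF assms(8)] .
  show ?thesis
  proof
    assume "ct J a p = fthr J a p"
    then show "\<forall>e. fthr (J_e J p e) a p = fthr (frob_pow J (p ^ e)) a p"
      using ct_le fthr_J_e_le_fthr[OF assms(7,8)] frob by (metis order_antisym)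
  next
    assume "\<forall>e. fthr (J_e J p e) a p = fthr (frob_pow J (p ^ e)) a p"
    then have "?\<gamma> = (\<lambda>_. fthr J a p)"
      using frob real_p_gt_1 by auto
    then show "ct J a p = fthr J a p"
      using \<gamma> LIMSEQ_const_iff by metis
  qed
qed

end
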